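(* Let $k\ge1$ be the cache size and let $N\ge k+1$. For the path access graph $P_N$ on $N$ vertices and $\mathcal{A}\in\{\mathrm{LRU},\mathrm{FAR}\}$, \[ \mathcal{I}^{P_N}[\mathrm{FWF},\mathcal{A}]=\left[0,\ 1-\frac{1}{k}\right]. \] Moreover, for $\mathcal{A}=\mathrm{LRU}$ the same equality $\mathcal{I}^{G}[\mathrm{FWF},\mathrm{LRU}]=[0,1-\frac1k]$ holds for any access graph $G$ containing a path on $k+1$ vertices.
   Context: Paging: a cache holds at most $k$ pages and is initially empty. A request to a page in the cache is a hit; otherwise it is a fault, the page is brought into the cache, evicting a page first if the cache is full. $\mathcal{A}(I)$ is the number of faults of $\mathcal{A}$ on request sequence $I$. LRU evicts the least recently requested cached page. FWF (flush-when-full): on a fault with a full cache, it empties the cache and then brings in the requested page. FAR (relative to the access graph): each requested page is marked; on a fault with a full cache, if all cached pages are marked it first unmarks all pages; it then evicts the unmarked cached page whose graph distance to the nearest marked page is largest, ties broken by evicting the least recently requested. Access graph: a graph $G$ whose vertices are the pages; a request sequence respects $G$ if any two consecutive requests are identical or adjacent in $G$; $L(G)$ is the set of such sequences. Relative interval: $\mathrm{Min}_{\mathcal{A},\mathcal{B}}(n,G)=\min\{\mathcal{A}(I)-\mathcal{B}(I): I\in L(G),|I|=n\}$, $\mathrm{Max}_{\mathcal{A},\mathcal{B}}(n,G)$ analogously with max; $\mathrm{Min}^G(\mathcal{A},\mathcal{B})=\liminf_{n\to\infty}\mathrm{Min}_{\mathcal{A},\mathcal{B}}(n,G)/n$, $\mathrm{Max}^G(\mathcal{A},\mathcal{B})=\limsup_{n\to\infty}\mathrm{Max}_{\mathcal{A},\mathcal{B}}(n,G)/n$,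 and $\mathcal{I}^G[\mathcal{A},\mathcal{B}]=[\mathrm{Min}^G(\mathcal{A},\mathcal{B}),\mathrm{Max}^G(\mathcal{A},\mathcal{B})]$. *)

theory Defs
  imports "HOL-Library.Extended_Real" "HOL-Library.Extended_Nat" "HOL-Library.Liminf_Limsup"
begin

definition respects_graph :: "'a set \<Rightarrow> ('a \<Rightarrow> 'a \<Rightarrow> bool) \<Rightarrow> 'a list \<Rightarrow> bool" where
  "respects_graph V E rs \<longleftrightarrow> set rs \<subseteq> V \<and>
     (\<forall>i. Suc i < length rs \<longrightarrow> rs ! i = rs ! Suc i \<or> E (rs ! i) (rs ! Suc i))"

definition gdist :: "('a \<Rightarrow> 'a \<Rightarrow> bool) \<Rightarrow> 'a \<Rightarrow> 'a \<Rightarrow> enat" where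
  "gdist E u v = (if \<exists>n. (E ^^ n) u v then enat (LEAST n. (E ^^ n) u v) else \<infinity>)"

text \<open>Path graph P_N on vertices 0..N-1.\<close>
definition path_edge :: "nat \<Rightarrow> nat \<Rightarrow> bool" where
  "path_edge i j \<longleftrightarrow> i + 1 = j \<or> j + 1 = i"

definition contains_path :: "'a set \<Rightarrow> ('a \<Rightarrow> 'a \<Rightarrow> bool) \<Rightarrow> nat \<Rightarrow> bool" where
  "contains_path V E m \<longleftrightarrow> (\<exists>vs. length vs = m \<and> distinct vs \<and> set vs \<subseteq> V \<and>
       (\<forall>i. Suc i < m \<longrightarrow> E (vs ! i) (vs ! Suc i)))"

definition last_req :: "'a list \<Rightarrow> 'a \<Rightarrow> nat" where
  "last_req h q = (GREATEST i. i < length h \<and> h ! i = q)"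

definition lru_step :: "nat \<Rightarrow> 'a list \<Rightarrow> 'a set \<Rightarrow> 'a \<Rightarrow> 'a set" where
  "lru_step k h C p =
     (if p \<in> C then C
      else if card C < k then insert p C
      else insert p (C - {ARG_MIN (last_req h) q. q \<in> C}))"

fun lru_aux :: "nat \<Rightarrow> 'a list \<Rightarrow> 'a set \<Rightarrow> 'a list \<Rightarrow> nat" where
  "lru_aux k h C [] = 0"
| "lru_aux k h C (p # ps) = (if p \<in> C then 0 else 1) + lru_aux k (h @ [p]) (lru_step k h C p) ps"

definition lru :: "nat \<Rightarrow> 'a list \<Rightarrow> nat" where
  "lru k rs = lru_aux k [] {} rs"

definition fwf_step :: "nat \<Rightarrow> 'a set \<Rightarrow> 'a \<Rightarrow> 'a set" where
  "fwf_step k C p = (if p \<in> C then C else if card C < k then insert p C else {p})"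

fun fwf_aux :: "nat \<Rightarrow> 'a set \<Rightarrow> 'a list \<Rightarrow> nat" where
  "fwf_aux k C [] = 0"
| "fwf_aux k C (p # ps) = (if p \<in> C then 0 else 1) + fwf_aux k (fwf_step k C p) ps"

definition fwf :: "nat \<Rightarrow> 'a list \<Rightarrow> nat" where
  "fwf k rs = fwf_aux k {} rs"

text \<open>FAR: state is (cache, marked pages).\<close>
definition far_step :: "nat \<Rightarrow> ('a \<Rightarrow> 'a \<Rightarrow> bool) \<Rightarrow> 'a list \<Rightarrow> 'a set \<times> 'a set \<Rightarrow> 'a
    \<Rightarrow> 'a set \<times> 'a set" where
  "far_step k E h S p =
     (let C = fst S; M = snd S in
      if p \<in> C then (C, insert p M)
      else if card C < k then (insert p C, insert p M)
      else
        let M' = insert p (if C \<subseteq> M then {} else M);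
            U = C - M';
            d = (\<lambda>q. Min ((\<lambda>m. gdist E q m) ` M'));
            D = Max (d ` U);
            v = (ARG_MIN (last_req h) q. q \<in> U \<and> d q = D)
        in (insert p (C - {v}), M'))"

fun far_aux :: "nat \<Rightarrow> ('a \<Rightarrow> 'a \<Rightarrow> bool) \<Rightarrow> 'a list \<Rightarrow> 'a set \<times> 'a set \<Rightarrow> 'a list \<Rightarrow> nat" where
  "far_aux k E h S [] = 0"
| "far_aux k E h S (p # ps) =
     (if p \<in> fst S then 0 else 1) + far_aux k E (h @ [p]) (far_step k E h S p) ps"

definition far :: "nat \<Rightarrow> ('a \<Rightarrow> 'a \<Rightarrow> bool) \<Rightarrow> 'a list \<Rightarrow> nat" where
  "far k E rs = far_aux k E [] ({}, {}) rs"

definition rel_min :: "('a list \<Rightarrow> nat) \<Rightarrow> ('a list \<Rightarrow> nat) \<Rightarrow> nat \<Rightarrow> 'a set \<Rightarrow> ('a \<Rightarrow> 'a \<Rightarrow> bool) \<Rightarrow> int" where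
  "rel_min A B n V E = Min {int (A rs) - int (B rs) | rs. respects_graph V E rs \<and> length rs = n}"

definition rel_max :: "('a list \<Rightarrow> nat) \<Rightarrow> ('a list \<Rightarrow> nat) \<Rightarrow> nat \<Rightarrow> 'a set \<Rightarrow> ('a \<Rightarrow> 'a \<Rightarrow> bool) \<Rightarrow> int" where
  "rel_max A B n V E = Max {int (A rs) - int (B rs) | rs. respects_graph V E rs \<and> length rs = n}"

definition rel_interval :: "('a list \<Rightarrow> nat) \<Rightarrow> ('a list \<Rightarrow> nat) \<Rightarrow> 'a set \<Rightarrow> ('a \<Rightarrow> 'a \<Rightarrow> bool) \<Rightarrow> ereal \<times> ereal" where
  "rel_interval A B V E =
     (liminf (\<lambda>n. ereal (real_of_int (rel_min A B n V E) / real n)),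
      limsup (\<lambda>n. ereal (real_of_int (rel_max A B n V E) / real n)))"

end

theory Submission
  imports Defs
begin

text \<open>The cache of FWF is always contained in that of LRU, and in that of FAR: for LRU because
  the pages FWF has requested since its last flush are the most recently used ones, for FAR
  because they are exactly the marked pages. Hence LRU and FAR never fault where FWF does not,
  and in every FWF phase of \<open>k\<close> faults they fault at least on the request that triggers the
  flush; with the potential \<open>k - |FWF cache|\<close> this gives
  \<open>k (FWF(I) - A(I)) \<le> (k - 1) |I| + k\<close>.
  Both ends of the interval are attained: constant request sequences give difference \<open>0\<close>, and
  walking back and forth along a path on \<open>k + 1\<close> vertices makes FWF fault on every request,
  while LRU and FAR fault only once per sweep, evicting the page at the far end of the path.\<close>

section \<open>Paging algorithms as transition systems\<close>

text \<open>A paging algorithm is a transition function that also sees the history of past requests;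
  \<open>cache\<close> extracts the cached pages from its state.\<close>

fun faults :: "('a list \<Rightarrow> 's \<Rightarrow> 'a \<Rightarrow> 's) \<Rightarrow> ('s \<Rightarrow> 'a set) \<Rightarrow> 'a list \<Rightarrow> 's \<Rightarrow> 'a list \<Rightarrow> nat"
  where
    "faults step cache h S [] = 0"
  | "faults step cache h S (p # ps) =
       (if p \<in> cache S then 0 else 1) + faults step cache (h @ [p]) (step h S p) ps"

fun run :: "('a list \<Rightarrow> 's \<Rightarrow> 'a \<Rightarrow> 's) \<Rightarrow> 'a list \<Rightarrow> 's \<Rightarrow> 'a list \<Rightarrow> 's" where
  "run step h S [] = S"
| "run step h S (p # ps) = run step (h @ [p]) (step h S p) ps"

lemma faults_append:
  "faults step cache h S (xs @ ys)
     = faults step cache h S xs + faults step cache (h @ xs) (run step h S xs) ys"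
  by (induction xs arbitrary: h S) auto

lemma run_append: "run step h S (xs @ ys) = run step (h @ xs) (run step h S xs) ys"
  by (induction xs arbitrary: h S) auto

lemma faults_le_length: "faults step cache h S xs \<le> length xs"
  by (induction xs arbitrary: h S) (simp_all add: le_SucI)

lemma faults_run_hits:
  assumes "\<And>h p. p \<in> cache S \<Longrightarrow> step h S p = S" and "set ps \<subseteq> cache S"
  shows "faults step cache h S ps = 0 \<and> run step h S ps = S"
  using assms(2) by (induction ps arbitrary: h) (auto simp: assms(1))

lemma fwf_eq_faults: "fwf k rs = faults (\<lambda>_. fwf_step k) id [] {} rs"
proof -
  have "fwf_aux k F rs = faults (\<lambda>_. fwf_step k) id h F rs" for h F
    by (induction rs arbitrary: h F) auto
  then show ?thesis by (simp add: fwf_def)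
qed

lemma lru_eq_faults: "lru k rs = faults (lru_step k) id [] {} rs"
proof -
  have "lru_aux k h C rs = faults (lru_step k) id h C rs" for h C
    by (induction rs arbitrary: h C) auto
  then show ?thesis by (simp add: lru_def)
qed

lemma far_eq_faults: "far k E rs = faults (far_step k E) fst [] ({}, {}) rs"
proof -
  have "far_aux k E h S rs = faults (far_step k E) fst h S rs" for h S
    by (induction rs arbitrary: h S) auto
  then show ?thesis by (simp add: far_def)
qed

lemma faults_fwf_fill:
  "distinct ps \<Longrightarrow> finite F \<Longrightarrow> set ps \<inter> F = {} \<Longrightarrow> card F + length ps \<le> k \<Longrightarrow>
   faults (\<lambda>_. fwf_step k) id h F ps = length ps \<and> run (\<lambda>_. fwf_step k) h F ps = F \<union> set ps"
  by (induction ps arbitrary: h F) (auto simp: fwf_step_def)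

lemma faults_lru_fill:
  "distinct ps \<Longrightarrow> finite C \<Longrightarrow> set ps \<inter> C = {} \<Longrightarrow> card C + length ps \<le> k \<Longrightarrow>
   faults (lru_step k) id h C ps = length ps \<and> run (lru_step k) h C ps = C \<union> set ps"
  by (induction ps arbitrary: h C) (auto simp: lru_step_def)

lemma faults_far_fill:
  "distinct ps \<Longrightarrow> finite C \<Longrightarrow> set ps \<inter> C = {} \<Longrightarrow> card C + length ps \<le> k \<Longrightarrow>
   faults (far_step k E) fst h (C, M) ps = length ps
   \<and> run (far_step k E) h (C, M) ps = (C \<union> set ps, M \<union> set ps)"
  by (induction ps arbitrary: h C M) (auto simp: far_step_def)

lemma faults_far_hits:
  assumes "set ps \<subseteq> C"
  shows "faults (far_step k E) fst h (C, M) ps = 0 \<and> run (far_step k E) h (C, M) ps = (C, M \<union> set ps)"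
  using assms by (induction ps arbitrary: h M) (auto simp: far_step_def)

lemma fwf_replicate:
  assumes "k \<ge> 1" shows "fwf k (replicate n p) = min n 1"
proof (cases n)
  case (Suc n')
  have "faults (\<lambda>_. fwf_step k) id [p] {p} (replicate n' p) = 0"
    by (rule conjunct1[OF faults_run_hits]) (auto simp: fwf_step_def)
  then show ?thesis using Suc assms by (simp add: fwf_eq_faults fwf_step_def)
qed (simp add: fwf_def)

lemma lru_replicate:
  assumes "k \<ge> 1" shows "lru k (replicate n p) = min n 1"
proof (cases n)
  case (Suc n')
  have "faults (lru_step k) id [p] {p} (replicate n' p) = 0"
    by (rule conjunct1[OF faults_run_hits]) (auto simp: lru_step_def)
  then show ?thesis using Suc assms by (simp add: lru_eq_faults lru_step_def)
qed (simp add: lru_def)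

lemma far_replicate:
  assumes "k \<ge> 1" shows "far k E (replicate n p) = min n 1"
proof (cases n)
  case (Suc n')
  have "faults (far_step k E) fst [p] ({p}, {p}) (replicate n' p) = 0"
    by (rule conjunct1[OF faults_run_hits]) (auto simp: far_step_def Let_def)
  then show ?thesis using Suc assms by (simp add: far_eq_faults far_step_def)
qed (simp add: far_def)

section \<open>FWF against algorithms whose cache contains that of FWF\<close>

text \<open>\<open>k - card F\<close> serves as a potential: a fault of FWF without a flush fills one more slot of
  its cache, and a flush is caused by a page outside FWF's full cache, which then equals the
  other cache, so that the other algorithm faults as well.\<close>

lemma fwf_excess_bound:
  fixes step :: "'a list \<Rightarrow> 's \<Rightarrow> 'a \<Rightarrow> 's" and cache :: "'s \<Rightarrow> 'a set"
  assumes k1: "k \<ge> 1"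
    and inv_step: "\<And>h F S p. Inv h F S \<Longrightarrow> Inv (h @ [p]) (fwf_step k F p) (step h S p)"
    and inv_cache: "\<And>h F S. Inv h F S \<Longrightarrow> F \<subseteq> cache S \<and> finite (cache S) \<and> card (cache S) \<le> k"
    and "Inv h F S"
  shows "faults step cache h S rs \<le> faults (\<lambda>_. fwf_step k) id h F rs
    \<and> int k * (int (faults (\<lambda>_. fwf_step k) id h F rs) - int (faults step cache h S rs))
        \<le> int (k - 1) * int (length rs) + int k - int (card F)"
  using \<open>Inv h F S\<close>
proof (induction rs arbitrary: h F S)
  case Nil
  have "card F \<le> k" using inv_cache[OF Nil] by (meson card_mono order_trans)
  then show ?case by simp
next
  case (Cons p ps)
  define F' S' where "F' = fwf_step k F p" and "S' = step h S p"
  define f0 a0 where "f0 = (if p \<in> F then 0 else 1 :: nat)" and "a0 = (if p \<in> cache S then 0 else 1 :: nat)"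
  define f a where "f = faults (\<lambda>_. fwf_step k) id (h @ [p]) F' ps" and "a = faults step cache (h @ [p]) S' ps"
  have IH: "a \<le> f \<and> int k * (int f - int a) \<le> int (k - 1) * int (length ps) + int k - int (card F')"
    unfolding f_def a_def F'_def S'_def by (rule Cons.IH[OF inv_step[OF Cons.prems]])
  from inv_cache[OF Cons.prems] have FS: "F \<subseteq> cache S" "finite (cache S)" "card (cache S) \<le> k"
    by auto
  have finF: "finite F" using FS finite_subset by blast
  have cardF: "card F \<le> k" using FS card_mono order_trans by blast
  have potential: "a0 \<le> f0 \<and> int k * (int f0 - int a0) + int (card F) \<le> int (k - 1) + int (card F')"
  proof -
    consider "p \<in> F" | "p \<notin> F" "card F < k" | "p \<notin> F" "card F = k" using cardF by linarith
    then show ?thesis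
    proof cases
      case 1
      then show ?thesis using FS by (auto simp: F'_def f0_def a0_def fwf_step_def)
    next
      case 2
      then have "card F' = card F + 1" using finF by (simp add: F'_def fwf_step_def)
      then show ?thesis using 2 k1 by (simp add: f0_def a0_def of_nat_diff)
    next
      case 3
      then have "F = cache S" using FS by (metis card_seteq)
      then have "a0 = 1" using 3 by (simp add: a0_def)
      then show ?thesis using 3 k1 by (simp add: F'_def f0_def fwf_step_def of_nat_diff)
    qed
  qed
  have unfold: "faults step cache h S (p # ps) = a0 + a" "faults (\<lambda>_. fwf_step k) id h F (p # ps) = f0 + f"
    by (simp_all add: a0_def a_def S'_def f0_def f_def F'_def)
  have "int k * (int (f0 + f) - int (a0 + a)) = int k * (int f0 - int a0) + int k * (int f - int a)"
    by (simp add: algebra_simps)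
  also have "\<dots> \<le> int (k - 1) * int (length ps) + int (k - 1) + int k - int (card F)"
    using IH potential by linarith
  also have "\<dots> = int (k - 1) * int (length (p # ps)) + int k - int (card F)"
    by (simp add: algebra_simps)
  finally show ?case unfolding unfold using IH potential by simp
qed

lemma last_req_eqI:
  assumes "i < length h" "h ! i = q" "\<And>j. i < j \<Longrightarrow> j < length h \<Longrightarrow> h ! j \<noteq> q"
  shows "last_req h q = i"
  unfolding last_req_def
  by (rule Greatest_equality) (use assms in \<open>force\<close>, metis assms(3) not_le)

lemma last_req_less:
  assumes "q \<in> set h" shows "last_req h q < length h"
proof -
  obtain i where "i < length h" "h ! i = q" using assms by (auto simp: in_set_conv_nth)
  then show ?thesis unfolding last_req_def
    using GreatestI_nat[of "\<lambda>i. i < length h \<and> h ! i = q" i "length h"] by auto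
qed

lemma last_req_snoc_same: "last_req (h @ [p]) p = length h"
  by (rule last_req_eqI) auto

lemma last_req_snoc_other:
  assumes "q \<noteq> p" shows "last_req (h @ [p]) q = last_req h q"
proof -
  have "(i < length (h @ [p]) \<and> (h @ [p]) ! i = q) = (i < length h \<and> h ! i = q)" for i
    using assms by (auto simp: nth_append less_Suc_eq)
  then show ?thesis unfolding last_req_def by presburger
qed

lemma card_lru_step_le:
  assumes "k \<ge> 1" "finite C" "card C \<le> k"
  shows "card (lru_step k h C p) \<le> k"
proof (cases "p \<notin> C \<and> card C = k")
  case True
  then have "C \<noteq> {}" using assms(1) by auto
  then have "(ARG_MIN (last_req h) q. q \<in> C) \<in> C" by (metis all_not_in_conv arg_min_nat_lemma)
  then show ?thesis using True assms by (simp add: lru_step_def card_Diff_singleton)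
qed (use assms in \<open>auto simp: lru_step_def\<close>)

lemma lru_step_keeps_recent:
  assumes "finite C" "card C \<le> k" "F \<subseteq> C" "card F < k"
    and recent: "\<forall>q\<in>F. \<forall>r\<in>C - F. last_req h r < last_req h q"
  shows "F \<subseteq> lru_step k h C p"
proof (cases "p \<in> C \<or> card C < k")
  case False
  define v where "v = (ARG_MIN (last_req h) q. q \<in> C)"
  have "F \<noteq> C" using False assms(4) by auto
  then obtain r where r: "r \<in> C" "r \<notin> F" using assms(3) by blast
  have "last_req h v \<le> last_req h r" unfolding v_def by (rule arg_min_nat_le) (rule r(1))
  then have "v \<notin> F" using recent r by (meson DiffI leD)
  then show ?thesis using False assms(3) by (auto simp: lru_step_def v_def[symmetric])
qed (use assms(3) in \<open>auto simp: lru_step_def\<close>)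

definition lru_fwf_inv :: "nat \<Rightarrow> 'a list \<Rightarrow> 'a set \<Rightarrow> 'a set \<Rightarrow> bool" where
  "lru_fwf_inv k h F C \<longleftrightarrow> finite C \<and> card C \<le> k \<and> F \<subseteq> C \<and> C \<subseteq> set h \<and>
     (\<forall>q\<in>F. \<forall>r\<in>C - F. last_req h r < last_req h q)"

lemma lru_fwf_inv_step:
  assumes k1: "k \<ge> 1" and inv: "lru_fwf_inv k h F C"
  shows "lru_fwf_inv k (h @ [p]) (fwf_step k F p) (lru_step k h C p)"
proof -
  define F' C' where "F' = fwf_step k F p" and "C' = lru_step k h C p"
  from inv have fin: "finite C" and cardC: "card C \<le> k" and FC: "F \<subseteq> C" and Ch: "C \<subseteq> set h"
    and recent: "\<forall>q\<in>F. \<forall>r\<in>C - F. last_req h r < last_req h q"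
    by (auto simp: lru_fwf_inv_def)
  have C'C: "C' \<subseteq> insert p C" and pC': "p \<in> C'" and pF': "p \<in> F'"
    by (auto simp: C'_def lru_step_def F'_def fwf_step_def)
  have F'_cases: "F' = {p} \<or> F' = insert p F" by (auto simp: F'_def fwf_step_def)
  have "F' \<subseteq> C'"
  proof -
    consider "p \<in> F" | "p \<notin> F" "card F < k" | "p \<notin> F" "\<not> card F < k" by blast
    then show ?thesis
    proof cases
      case 1
      then show ?thesis using FC by (auto simp: F'_def fwf_step_def C'_def lru_step_def)
    next
      case 2
      then show ?thesis using lru_step_keeps_recent[OF fin cardC FC _ recent] pC'
        by (simp add: F'_def fwf_step_def C'_def)
    qed (use pC' in \<open>simp add: F'_def fwf_step_def\<close>)
  qed
  moreover have "\<forall>q\<in>F'. \<forall>r\<in>C' - F'. last_req (h @ [p]) r < last_req (h @ [p]) q"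
  proof (intro ballI)
    fix q r assume q: "q \<in> F'" and r: "r \<in> C' - F'"
    have rp: "r \<noteq> p" and rC: "r \<in> C" using r pF' C'C by auto
    show "last_req (h @ [p]) r < last_req (h @ [p]) q"
    proof (cases "q = p")
      case True
      then show ?thesis using last_req_less[OF subsetD[OF Ch rC]]
        by (simp add: last_req_snoc_same last_req_snoc_other[OF rp])
    next
      case False
      then have "q \<in> F" "r \<notin> F" using F'_cases q r by auto
      then show ?thesis using recent rC by (simp add: last_req_snoc_other[OF rp] last_req_snoc_other[OF False])
    qed
  qed
  moreover have "finite C'" "C' \<subseteq> set (h @ [p])" using C'C fin Ch finite_subset by auto
  ultimately show ?thesis using card_lru_step_le[OF k1 fin cardC]
    unfolding lru_fwf_inv_def F'_def C'_def by blast
qed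

lemma lru_fwf_bounds:
  assumes "k \<ge> 1"
  shows "lru k rs \<le> fwf k rs
    \<and> int k * (int (fwf k rs) - int (lru k rs)) \<le> int (k - 1) * int (length rs) + int k"
proof -
  have "faults (lru_step k) id [] {} rs \<le> faults (\<lambda>_. fwf_step k) id [] {} rs
    \<and> int k * (int (faults (\<lambda>_. fwf_step k) id [] {} rs) - int (faults (lru_step k) id [] {} rs))
      \<le> int (k - 1) * int (length rs) + int k - int (card ({} :: 'a set))"
  proof (rule fwf_excess_bound[where Inv="lru_fwf_inv k"])
    show "lru_fwf_inv k (h @ [p]) (fwf_step k F p) (lru_step k h C p)" if "lru_fwf_inv k h F C"
      for h F C p using lru_fwf_inv_step[OF assms that] .
  qed (use assms in \<open>simp_all add: lru_fwf_inv_def\<close>)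
  then show ?thesis by (simp add: lru_eq_faults fwf_eq_faults)
qed

lemma far_step_full_fault:
  assumes "finite C" "card C = k" "k \<ge> 1" "p \<notin> C"
  obtains v where "v \<in> C" "v \<notin> insert p (if C \<subseteq> M then {} else M)"
    and "far_step k E h (C, M) p = (insert p (C - {v}), insert p (if C \<subseteq> M then {} else M))"
proof -
  define M' where "M' = insert p (if C \<subseteq> M then {} else M)"
  define d where "d = (\<lambda>q. Min ((\<lambda>m. gdist E q m) ` M'))"
  define D where "D = Max (d ` (C - M'))"
  define v where "v = (ARG_MIN (last_req h) q. q \<in> C - M' \<and> d q = D)"
  have "C - M' \<noteq> {}" using assms by (cases "C \<subseteq> M") (auto simp: M'_def)
  then have "D \<in> d ` (C - M')" unfolding D_def using assms(1) by (intro Max_in) auto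
  then have "v \<in> C - M'" unfolding v_def by (metis (mono_tags, lifting) arg_min_nat_lemma imageE)
  moreover have "far_step k E h (C, M) p = (insert p (C - {v}), M')"
    using assms unfolding far_step_def Let_def M'_def d_def D_def v_def by simp
  ultimately show ?thesis using that unfolding M'_def by blast
qed

definition far_fwf_inv :: "nat \<Rightarrow> 'a set \<Rightarrow> 'a set \<times> 'a set \<Rightarrow> bool" where
  "far_fwf_inv k F S \<longleftrightarrow> snd S = F \<and> finite (fst S) \<and> card (fst S) \<le> k \<and> F \<subseteq> fst S"

lemma far_fwf_inv_step:
  assumes k1: "k \<ge> 1" and inv: "far_fwf_inv k F (C, M)"
  shows "far_fwf_inv k (fwf_step k F p) (far_step k E h (C, M) p)"
proof -
  from inv have MF: "M = F" and fin: "finite C" and cardC: "card C \<le> k" and FC: "F \<subseteq> C"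
    by (auto simp: far_fwf_inv_def)
  consider "p \<in> C" | "p \<notin> C" "card C < k" | "p \<notin> C" "card C = k" using cardC by linarith
  then show ?thesis
  proof cases
    case 1
    have "card F < card C \<or> p \<in> F"
    proof (rule disjCI)
      assume "p \<notin> F"
      then have "F \<subset> C" using FC 1 by blast
      then show "card F < card C" by (rule psubset_card_mono[OF fin])
    qed
    then have "fwf_step k F p = insert p F" using cardC by (auto simp: fwf_step_def)
    then show ?thesis using 1 MF fin cardC FC by (simp add: far_fwf_inv_def far_step_def)
  next
    case 2
    then have "card F < k" using FC fin card_mono by (metis le_less_trans)
    then have "fwf_step k F p = insert p F" using 2 FC by (auto simp: fwf_step_def)
    then show ?thesis using 2 MF fin FC by (auto simp: far_fwf_inv_def far_step_def)
  next
    case 3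
    obtain v where v: "v \<in> C" "v \<notin> insert p (if C \<subseteq> M then {} else M)"
      and step: "far_step k E h (C, M) p = (insert p (C - {v}), insert p (if C \<subseteq> M then {} else M))"
      using far_step_full_fault[OF fin 3(2) k1 3(1)] .
    have card': "card (insert p (C - {v})) \<le> k" using v 3 fin k1 by (simp add: card_Diff_singleton)
    show ?thesis
    proof (cases "C \<subseteq> M")
      case True
      then have "fwf_step k F p = {p}" using MF FC 3 by (auto simp: fwf_step_def)
      then show ?thesis using step True card' fin by (simp add: far_fwf_inv_def)
    next
      case False
      then have "card F < k" using MF FC fin 3(2) by (metis card_seteq le_neq_implies_less card_mono)
      then have "fwf_step k F p = insert p F" using 3 FC by (auto simp: fwf_step_def)
      then show ?thesis using step False card' fin v MF FC by (auto simp: far_fwf_inv_def)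
    qed
  qed
qed

lemma far_fwf_bounds:
  assumes "k \<ge> 1"
  shows "far k E rs \<le> fwf k rs
    \<and> int k * (int (fwf k rs) - int (far k E rs)) \<le> int (k - 1) * int (length rs) + int k"
proof -
  have "faults (far_step k E) fst [] ({}, {}) rs \<le> faults (\<lambda>_. fwf_step k) id [] {} rs
    \<and> int k * (int (faults (\<lambda>_. fwf_step k) id [] {} rs) - int (faults (far_step k E) fst [] ({}, {}) rs))
      \<le> int (k - 1) * int (length rs) + int k - int (card ({} :: 'a set))"
  proof (rule fwf_excess_bound[where Inv="\<lambda>_. far_fwf_inv k"])
    show "far_fwf_inv k (fwf_step k F p) (far_step k E h S p)" if "far_fwf_inv k F S" for h F S p
      using far_fwf_inv_step[OF assms, of F "fst S" "snd S"] that by simp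
  qed (use assms in \<open>simp_all add: far_fwf_inv_def\<close>)
  then show ?thesis by (simp add: far_eq_faults fwf_eq_faults)
qed

section \<open>Zigzag request sequences\<close>

text \<open>\<open>zigzag k\<close> runs through \<open>0, 1, \<dots>, k, k - 1, \<dots>, 1, 0, 1, \<dots>\<close>; its \<open>m\<close>-th block of
  \<open>k\<close> steps goes up from \<open>0\<close> for even \<open>m\<close> and down from \<open>k\<close> for odd \<open>m\<close>.\<close>

definition zigzag :: "nat \<Rightarrow> nat \<Rightarrow> nat" where
  "zigzag k t = (if t mod (2 * k) \<le> k then t mod (2 * k) else 2 * k - t mod (2 * k))"

definition zigzag_seq :: "(nat \<Rightarrow> 'a) \<Rightarrow> nat \<Rightarrow> nat \<Rightarrow> 'a list" where
  "zigzag_seq g k n = map (\<lambda>t. g (zigzag k t)) [0..<n]"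

definition block_start :: "nat \<Rightarrow> nat \<Rightarrow> nat" where
  "block_start k m = (if even m then 0 else k)"

definition zigzag_block :: "(nat \<Rightarrow> 'a) \<Rightarrow> nat \<Rightarrow> nat \<Rightarrow> 'a list" where
  "zigzag_block g k m = map (\<lambda>i. g (if even m then i else k - i)) [0..<k]"

lemma zigzag_le: "zigzag k t \<le> k"
  unfolding zigzag_def by auto

lemma zigzag_Suc:
  assumes "k \<ge> 1" shows "zigzag k (Suc t) = Suc (zigzag k t) \<or> zigzag k t = Suc (zigzag k (Suc t))"
proof -
  define r where "r = t mod (2 * k)"
  have "r < 2 * k" using assms by (simp add: r_def)
  moreover have "Suc t mod (2 * k) = (if Suc r = 2 * k then 0 else Suc r)" by (simp add: r_def mod_Suc)
  ultimately show ?thesis using assms unfolding zigzag_def r_def[symmetric] by (auto; linarith)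
qed

lemma zigzag_block_index:
  assumes "i < k" shows "zigzag k (m * k + i) = (if even m then i else k - i)"
proof -
  have "(m * k + i) mod (2 * k) = (if even m then i else k + i)"
  proof (cases "even m")
    case True
    then obtain a where "m = 2 * a" by (elim evenE)
    then have "(m * k + i) mod (2 * k) = (i + a * (2 * k)) mod (2 * k)" by (simp add: algebra_simps)
    then show ?thesis using True assms by simp
  next
    case False
    then obtain a where "m = 2 * a + 1" by (elim oddE)
    then have "(m * k + i) mod (2 * k) = (k + i + a * (2 * k)) mod (2 * k)" by (simp add: algebra_simps)
    then show ?thesis using False assms by simp
  qed
  then show ?thesis using assms by (auto simp: zigzag_def)
qed

lemma zigzag_seq_respects:
  assumes "k \<ge> 1" and edges: "\<And>j. j < k \<Longrightarrow> E (g j) (g (Suc j)) \<and> E (g (Suc j)) (g j)"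
    and "g ` {0..k} \<subseteq> V"
  shows "respects_graph V E (zigzag_seq g k n)"
  unfolding respects_graph_def zigzag_seq_def
proof (intro conjI allI impI)
  show "set (map (\<lambda>t. g (zigzag k t)) [0..<n]) \<subseteq> V" using assms(3) zigzag_le by fastforce
next
  fix i assume "Suc i < length (map (\<lambda>t. g (zigzag k t)) [0..<n])"
  moreover have "E (g (zigzag k i)) (g (zigzag k (Suc i)))"
    using zigzag_Suc[OF assms(1), of i] zigzag_le[of k i] zigzag_le[of k "Suc i"] edges by auto
  ultimately show "map (\<lambda>t. g (zigzag k t)) [0..<n] ! i = map (\<lambda>t. g (zigzag k t)) [0..<n] ! Suc i
      \<or> E (map (\<lambda>t. g (zigzag k t)) [0..<n] ! i) (map (\<lambda>t. g (zigzag k t)) [0..<n] ! Suc i)"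
    by simp
qed

lemma zigzag_seq_append:
  "j \<le> n \<Longrightarrow> zigzag_seq g k n = zigzag_seq g k j @ map (\<lambda>t. g (zigzag k t)) [j..<n]"
  unfolding zigzag_seq_def by (metis le_add_diff_inverse map_append upt_add_eq_append zero_le)

lemma length_zigzag_block [simp]: "length (zigzag_block g k m) = k"
  by (simp add: zigzag_block_def)

lemma nth_zigzag_block: "i < k \<Longrightarrow> zigzag_block g k m ! i = g (if even m then i else k - i)"
  by (simp add: zigzag_block_def)

lemma zigzag_seq_Suc_block: "zigzag_seq g k (Suc m * k) = zigzag_seq g k (m * k) @ zigzag_block g k m"
proof -
  have "map (\<lambda>t. g (zigzag k t)) [m * k..<Suc m * k] = zigzag_block g k m"
    by (rule nth_equalityI) (simp_all add: nth_zigzag_block zigzag_block_index)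
  then show ?thesis using zigzag_seq_append[of "m * k" "Suc m * k" g k] by simp
qed

lemma zigzag_block_Cons:
  "k \<ge> 1 \<Longrightarrow> zigzag_block g k m = g (block_start k m) # tl (zigzag_block g k m)"
  by (cases "zigzag_block g k m") (auto simp: block_start_def zigzag_block_def upt_conv_Cons)

lemma set_zigzag_block: "set (zigzag_block g k m) = g ` (if even m then {0..<k} else {1..k})"
proof -
  have "(\<lambda>i. k - i) ` {0..<k} = {1..k}"
  proof
    show "{1..k} \<subseteq> (\<lambda>i. k - i) ` {0..<k}"
    proof
      fix x assume "x \<in> {1..k}"
      then have "x = k - (k - x)" "k - x \<in> {0..<k}" by auto
      then show "x \<in> (\<lambda>i. k - i) ` {0..<k}" by blast
    qed
  qed auto
  then show ?thesis unfolding zigzag_block_def by (simp add: image_image flip: image_image[of g "\<lambda>i. k - i"])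
qed

lemma distinct_zigzag_block:
  assumes "inj_on g {0..k}" shows "distinct (zigzag_block g k m)"
  unfolding zigzag_block_def distinct_map
  by (auto intro!: inj_onI dest: inj_onD[OF assms] split: if_splits)

lemma card_set_zigzag_block: "inj_on g {0..k} \<Longrightarrow> card (set (zigzag_block g k m)) = k"
  by (simp add: distinct_card distinct_zigzag_block)

lemma block_start_notin_prev:
  assumes inj: "inj_on g {0..k}" and "k \<ge> 1"
  shows "g (block_start k (Suc m)) \<notin> set (zigzag_block g k m)"
proof
  assume "g (block_start k (Suc m)) \<in> set (zigzag_block g k m)"
  then obtain i where i: "i \<in> (if even m then {0..<k} else {1..k})" "g (block_start k (Suc m)) = g i"
    by (auto simp: set_zigzag_block)
  then have "block_start k (Suc m) = i"
    by (intro inj_onD[OF inj]) (auto simp: block_start_def split: if_splits)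
  then show False using i(1) assms(2) by (auto simp: block_start_def split: if_splits)
qed

lemma set_zigzag_block_shift:
  assumes inj: "inj_on g {0..k}" and "k \<ge> 1"
  shows "set (zigzag_block g k (Suc m))
    = insert (g (block_start k (Suc m))) (set (zigzag_block g k m) - {g (block_start k m)})"
proof -
  have diff: "g ` A - {g x} = g ` (A - {x})" if "A \<subseteq> {0..k}" "x \<in> {0..k}" for A x
    using inj_on_image_set_diff[OF inj, of A "{x}"] that by auto
  have "insert 0 ({1..k} - {k}) = {0..<k}" "insert k ({0..<k} - {0}) = {1..k}"
    using assms(2) by auto
  moreover have "g ` {0..<k} - {g 0} = g ` ({0..<k} - {0})" "g ` {1..k} - {g k} = g ` ({1..k} - {k})"
    by (rule diff; auto)+
  ultimately show ?thesis
    by (cases "even m") (simp_all add: set_zigzag_block block_start_def flip: image_insert)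
qed

lemma last_req_zigzag_seq:
  assumes inj: "inj_on g {0..k}" and i: "i < k"
  shows "last_req (zigzag_seq g k (Suc m * k)) (zigzag_block g k m ! i) = m * k + i"
proof (rule last_req_eqI)
  have seq: "zigzag_seq g k (Suc m * k) ! (m * k + j) = zigzag_block g k m ! j" if "j < k" for j
    using that by (simp add: zigzag_seq_def nth_zigzag_block zigzag_block_index)
  show "m * k + i < length (zigzag_seq g k (Suc m * k))" using i by (simp add: zigzag_seq_def)
  show "zigzag_seq g k (Suc m * k) ! (m * k + i) = zigzag_block g k m ! i" using seq i .
  fix j assume j: "m * k + i < j" "j < length (zigzag_seq g k (Suc m * k))"
  define j' where "j' = j - m * k"
  have "j = m * k + j'" "j' < k" "j' \<noteq> i" using j by (auto simp: j'_def zigzag_seq_def)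
  then show "zigzag_seq g k (Suc m * k) ! j \<noteq> zigzag_block g k m ! i"
    using seq distinct_zigzag_block[OF inj, of m] i by (simp add: nth_eq_iff_index_eq)
qed

lemma faults_zigzag_blocks:
  assumes "\<And>m. faults step cache (zigzag_seq g k (m * k)) (St m) (zigzag_block g k m) = cost m
      \<and> run step (zigzag_seq g k (m * k)) (St m) (zigzag_block g k m) = St (Suc m)"
  shows "faults step cache [] (St 0) (zigzag_seq g k (m * k)) = (\<Sum>i<m. cost i)
    \<and> run step [] (St 0) (zigzag_seq g k (m * k)) = St m"
proof (induction m)
  case 0
  then show ?case by (simp add: zigzag_seq_def)
next
  case (Suc m)
  then show ?case using assms[of m] unfolding zigzag_seq_Suc_block faults_append run_append by simp
qed

text \<open>The cache of FWF, LRU and FAR after the first \<open>m\<close> blocks of a zigzag sequence.\<close>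

fun zigzag_cache :: "(nat \<Rightarrow> 'a) \<Rightarrow> nat \<Rightarrow> nat \<Rightarrow> 'a set" where
  "zigzag_cache g k 0 = {}"
| "zigzag_cache g k (Suc m) = set (zigzag_block g k m)"

lemma fwf_zigzag_block:
  assumes k1: "k \<ge> 1" and inj: "inj_on g {0..k}"
  shows "faults (\<lambda>_. fwf_step k) id h (zigzag_cache g k m) (zigzag_block g k m) = k
    \<and> run (\<lambda>_. fwf_step k) h (zigzag_cache g k m) (zigzag_block g k m) = zigzag_cache g k (Suc m)"
proof (cases m)
  case 0
  then show ?thesis using faults_fwf_fill[of "zigzag_block g k 0" "{}" k] distinct_zigzag_block[OF inj]
    by simp
next
  case (Suc m')
  let ?F = "set (zigzag_block g k m')" and ?p = "g (block_start k (Suc m'))"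
  obtain rest where block: "zigzag_block g k (Suc m') = ?p # rest" using zigzag_block_Cons[OF k1] by blast
  have "distinct (?p # rest)" "length rest = k - 1"
    using distinct_zigzag_block[OF inj, of "Suc m'"] length_zigzag_block[of g k "Suc m'"]
    unfolding block by auto
  have "?p \<notin> ?F" "card ?F = k"
    using block_start_notin_prev[OF inj k1] card_set_zigzag_block[OF inj] by simp_all
  then have "fwf_step k ?F ?p = {?p}" by (simp add: fwf_step_def)
  moreover have "faults (\<lambda>_. fwf_step k) id (h @ [?p]) {?p} rest = length rest
      \<and> run (\<lambda>_. fwf_step k) (h @ [?p]) {?p} rest = {?p} \<union> set rest"
    by (rule faults_fwf_fill) (use \<open>distinct (?p # rest)\<close> \<open>length rest = k - 1\<close> k1 in auto)
  ultimately show ?thesis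
    unfolding Suc using \<open>?p \<notin> ?F\<close> \<open>length rest = k - 1\<close> k1 by (simp add: block)
qed

lemma lru_zigzag_block:
  assumes k1: "k \<ge> 1" and inj: "inj_on g {0..k}"
  shows "faults (lru_step k) id (zigzag_seq g k (m * k)) (zigzag_cache g k m) (zigzag_block g k m)
      = (if m = 0 then k else 1)
    \<and> run (lru_step k) (zigzag_seq g k (m * k)) (zigzag_cache g k m) (zigzag_block g k m)
      = zigzag_cache g k (Suc m)"
proof (cases m)
  case 0
  then show ?thesis using faults_lru_fill[of "zigzag_block g k 0" "{}" k] distinct_zigzag_block[OF inj]
    by simp
next
  case (Suc m')
  let ?h = "zigzag_seq g k (Suc m' * k)" and ?C = "set (zigzag_block g k m')"
    and ?p = "g (block_start k (Suc m'))" and ?q = "zigzag_block g k m' ! 0"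
  obtain rest where block: "zigzag_block g k (Suc m') = ?p # rest" using zigzag_block_Cons[OF k1] by blast
  have "(ARG_MIN (last_req ?h) q. q \<in> ?C) = ?q"
  proof -
    have "?q \<in> ?C" using k1 by simp
    moreover have "last_req ?h ?q < last_req ?h q" if q: "q \<in> ?C" and ne: "q \<noteq> ?q" for q
    proof -
      obtain i where "i < k" "q = zigzag_block g k m' ! i"
        using q unfolding in_set_conv_nth length_zigzag_block by blast
      then show ?thesis using ne last_req_zigzag_seq[OF inj] k1 by (cases "i = 0") auto
    qed
    ultimately show ?thesis using arg_min_nat_lemma[of "\<lambda>q. q \<in> ?C" ?q "last_req ?h"] by (meson not_le)
  qed
  moreover have "?q = g (block_start k m')" using k1 by (simp add: nth_zigzag_block block_start_def)
  moreover have "?p \<notin> ?C" "card ?C = k"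
    using block_start_notin_prev[OF inj k1] card_set_zigzag_block[OF inj] by simp_all
  ultimately have "lru_step k ?h ?C ?p = set (zigzag_block g k (Suc m'))"
    using set_zigzag_block_shift[OF inj k1, of m'] by (simp add: lru_step_def)
  moreover have "faults (lru_step k) id (?h @ [?p]) (set (?p # rest)) rest = 0
      \<and> run (lru_step k) (?h @ [?p]) (set (?p # rest)) rest = set (?p # rest)"
    by (rule faults_run_hits) (auto simp: lru_step_def)
  ultimately show ?thesis unfolding Suc using \<open>?p \<notin> ?C\<close> by (simp add: block)
qed

lemma gdist_path_edge: "gdist path_edge u v = enat (if u \<le> v then v - u else u - v)"
proof -
  have walk_up: "(path_edge ^^ d) u (u + d)" for u d
  proof (induction d)
    case (Suc d)
    have "path_edge (u + d) (u + Suc d)" by (simp add: path_edge_def)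
    with Suc show ?case by (rule relpowp_Suc_I)
  qed simp
  have walk_down: "(path_edge ^^ d) (u + d) u" for u d
  proof (induction d)
    case (Suc d)
    have "path_edge (u + Suc d) (u + d)" by (simp add: path_edge_def)
    then show ?case using Suc by (rule relpowp_Suc_I2)
  qed simp
  have shortest: "(if u \<le> v then v - u else u - v) \<le> n" if "(path_edge ^^ n) u v" for n v
    using that
  proof (induction n arbitrary: v)
    case (Suc n)
    then obtain w where w: "(path_edge ^^ n) u w" "path_edge w v" by (elim relpowp_Suc_E)
    then show ?case using Suc.IH[OF w(1)] unfolding path_edge_def by (auto split: if_splits)
  qed (auto elim: relpowp_0_E)
  have exact: "(path_edge ^^ (if u \<le> v then v - u else u - v)) u v"
    using walk_up[where u=u and d="v - u"] walk_down[where u=v and d="u - v"] by auto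
  have "(LEAST n. (path_edge ^^ n) u v) = (if u \<le> v then v - u else u - v)"
    by (rule Least_equality) (use exact shortest in auto)
  then show ?thesis unfolding gdist_def using exact by auto
qed

lemma far_step_flush:
  assumes "finite C" "card C = k" "p \<notin> C" "C \<subseteq> M" "v \<in> C"
    and farthest: "\<forall>q\<in>C. q \<noteq> v \<longrightarrow> gdist E q p < gdist E v p"
  shows "far_step k E h (C, M) p = (insert p (C - {v}), {p})"
proof -
  have "(MAX q\<in>C. gdist E q p) = gdist E v p"
    by (rule Max_eqI) (use assms in \<open>auto simp: less_imp_le\<close>)
  then have "(q \<in> C \<and> q \<noteq> p \<and> gdist E q p = (MAX q\<in>C. gdist E q p)) = (q = v)" for q
    using assms by auto
  then have "(ARG_MIN (last_req h) q. q \<in> C \<and> q \<noteq> p \<and> gdist E q p = (MAX q\<in>C. gdist E q p)) = v"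
    using arg_min_nat_lemma[of "\<lambda>q. q = v" v "last_req h"] by simp
  then show ?thesis using assms by (simp add: far_step_def Let_def)
qed

lemma far_zigzag_block:
  assumes k1: "k \<ge> 1"
  shows "faults (far_step k path_edge) fst h (zigzag_cache id k m, zigzag_cache id k m) (zigzag_block id k m)
      = (if m = 0 then k else 1)
    \<and> run (far_step k path_edge) h (zigzag_cache id k m, zigzag_cache id k m) (zigzag_block id k m)
      = (zigzag_cache id k (Suc m), zigzag_cache id k (Suc m))"
proof (cases m)
  case 0
  then show ?thesis using faults_far_fill[of "zigzag_block id k 0" "{}" k path_edge h "{}"]
      distinct_zigzag_block[of id k] by simp
next
  case (Suc m')
  let ?C = "set (zigzag_block id k m')" and ?p = "block_start k (Suc m')" and ?v = "block_start k m'"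
  obtain rest where block: "zigzag_block id k (Suc m') = ?p # rest"
    using zigzag_block_Cons[OF k1, of id "Suc m'"] by (metis id_apply)
  have inj: "inj_on (id :: nat \<Rightarrow> nat) {0..k}" by simp
  have "?p \<notin> ?C" "card ?C = k"
    using block_start_notin_prev[OF inj k1] card_set_zigzag_block[OF inj] by simp_all
  moreover have "?v \<in> ?C" "\<forall>q\<in>?C. q \<noteq> ?v \<longrightarrow> gdist path_edge q ?p < gdist path_edge ?v ?p"
    using k1 by (auto simp: set_zigzag_block block_start_def gdist_path_edge)
  ultimately have "far_step k path_edge h (?C, ?C) ?p = (set (zigzag_block id k (Suc m')), {?p})"
    using far_step_flush[of ?C k ?p ?C ?v path_edge h] set_zigzag_block_shift[OF inj k1, of m']
    by simp
  moreover have "faults (far_step k path_edge) fst (h @ [?p]) (set (?p # rest), {?p}) rest = 0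
      \<and> run (far_step k path_edge) (h @ [?p]) (set (?p # rest), {?p}) rest
        = (set (?p # rest), {?p} \<union> set rest)"
    by (rule faults_far_hits) auto
  ultimately show ?thesis unfolding Suc using \<open>?p \<notin> ?C\<close> by (simp add: block)
qed

lemma zigzag_fwf_excess:
  assumes k1: "k \<ge> 1" and inj: "inj_on g {0..k}"
    and blocks: "\<And>m. faults step cache (zigzag_seq g k (m * k)) (St m) (zigzag_block g k m)
        = (if m = 0 then k else 1)
      \<and> run step (zigzag_seq g k (m * k)) (St m) (zigzag_block g k m) = St (Suc m)"
  shows "int (k - 1) * int (n div k) - 2 * int k
    \<le> int (fwf k (zigzag_seq g k n)) - int (faults step cache [] (St 0) (zigzag_seq g k n))"
proof -
  define m where "m = n div k"
  define tail where "tail = map (\<lambda>t. g (zigzag k t)) [m * k..<n]"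
  have split: "zigzag_seq g k n = zigzag_seq g k (m * k) @ tail"
    unfolding tail_def m_def by (rule zigzag_seq_append) (simp add: div_times_less_eq_dividend)
  have "length tail = n mod k" by (simp add: tail_def m_def minus_div_mult_eq_mod)
  then have "length tail < k" using k1 by simp
  then have "faults step cache (zigzag_seq g k (m * k)) (St m) tail < k"
    using faults_le_length[of step cache "zigzag_seq g k (m * k)" "St m" tail] by linarith
  moreover have "faults step cache [] (St 0) (zigzag_seq g k n)
      = (\<Sum>i<m. if i = 0 then k else 1) + faults step cache (zigzag_seq g k (m * k)) (St m) tail"
    using faults_zigzag_blocks[where cost="\<lambda>i. if i = 0 then k else 1", OF blocks, of m]
    by (simp add: split faults_append)
  moreover have "(\<Sum>i<m. if i = 0 then k else 1) \<le> k + m"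
    by (induction m) auto
  moreover have "m * k \<le> fwf k (zigzag_seq g k n)"
    using faults_zigzag_blocks[where St="zigzag_cache g k" and cost="\<lambda>_. k",
        OF fwf_zigzag_block[OF k1 inj], of m]
    by (simp add: fwf_eq_faults split faults_append)
  moreover have "int (k - 1) * int m = int (m * k) - int m" using k1 by (simp add: of_nat_diff algebra_simps)
  ultimately show ?thesis unfolding m_def[symmetric] by linarith
qed

section \<open>The relative interval\<close>

lemma finite_respecting_lists:
  assumes "finite V" shows "finite {rs. respects_graph V E rs \<and> length rs = n}"
proof -
  have "{rs. respects_graph V E rs \<and> length rs = n} \<subseteq> {rs. set rs \<subseteq> V \<and> length rs = n}"
    by (auto simp: respects_graph_def)
  then show ?thesis using finite_lists_length_eq[OF assms] finite_subset by blast
qed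

lemma rel_min_le:
  "finite V \<Longrightarrow> respects_graph V E rs \<Longrightarrow> rel_min A B (length rs) V E \<le> int (A rs) - int (B rs)"
  unfolding rel_min_def by (rule Min_le) (auto intro: finite_image_set finite_respecting_lists)

lemma rel_max_ge:
  "finite V \<Longrightarrow> respects_graph V E rs \<Longrightarrow> int (A rs) - int (B rs) \<le> rel_max A B (length rs) V E"
  unfolding rel_max_def by (rule Max_ge) (auto intro: finite_image_set finite_respecting_lists)

lemma rel_min_max_attained:
  assumes "finite V" "respects_graph V E rs0" "length rs0 = n"
  shows "\<exists>rs. respects_graph V E rs \<and> length rs = n \<and> rel_min A B n V E = int (A rs) - int (B rs)"
    and "\<exists>rs. respects_graph V E rs \<and> length rs = n \<and> rel_max A B n V E = int (A rs) - int (B rs)"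
proof -
  let ?S = "{int (A rs) - int (B rs) | rs. respects_graph V E rs \<and> length rs = n}"
  have "finite ?S" by (rule finite_image_set) (rule finite_respecting_lists[OF assms(1)])
  moreover have "?S \<noteq> {}" using assms(2,3) by blast
  ultimately have "Min ?S \<in> ?S" "Max ?S \<in> ?S" using Min_in Max_in by blast+
  then show "\<exists>rs. respects_graph V E rs \<and> length rs = n \<and> rel_min A B n V E = int (A rs) - int (B rs)"
    and "\<exists>rs. respects_graph V E rs \<and> length rs = n \<and> rel_max A B n V E = int (A rs) - int (B rs)"
    unfolding rel_min_def rel_max_def by blast+
qed

lemma LIMSEQ_abs_diff_le_over_n:
  fixes x :: "nat \<Rightarrow> real"
  assumes "\<And>n. n \<ge> 1 \<Longrightarrow> \<bar>x n - a\<bar> \<le> c / real n"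
  shows "x \<longlonglongrightarrow> a"
proof (rule tendsto_sandwich[where f="\<lambda>n. a - c / real n" and h="\<lambda>n. a + c / real n"])
  show "\<forall>\<^sub>F n in sequentially. a - c / real n \<le> x n" "\<forall>\<^sub>F n in sequentially. x n \<le> a + c / real n"
    using assms unfolding eventually_sequentially abs_le_iff by force+
  show "(\<lambda>n. a - c / real n) \<longlonglongrightarrow> a" "(\<lambda>n. a + c / real n) \<longlonglongrightarrow> a"
    using tendsto_diff[OF tendsto_const lim_const_over_n] tendsto_add[OF tendsto_const lim_const_over_n]
    by simp_all
qed

lemma rel_max_rate:
  fixes R :: int and k n q :: nat
  assumes "k \<ge> 1" "n \<ge> 1" and upper: "int k * R \<le> int (k - 1) * int n + int k"
    and lower: "int (k - 1) * int q - 2 * int k \<le> R" and q: "n \<le> k * q + k"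
  shows "\<bar>real_of_int R / real n - (1 - 1 / real k)\<bar> \<le> 3 * real k / real n"
proof -
  have k: "real k \<ge> 1" and n: "real n \<ge> 1" using assms(1,2) by simp_all
  have "real_of_int (int k * R) \<le> real_of_int (int (k - 1) * int n + int k)"
    using upper by (simp only: of_int_le_iff)
  then have up: "real k * R \<le> (real k - 1) * real n + real k"
    using assms(1) by (simp add: of_nat_diff)
  have "real_of_int (int (k - 1) * int q - 2 * int k) \<le> real_of_int R"
    using lower by (simp only: of_int_le_iff)
  then have "real k * ((real k - 1) * real q - 2 * real k) \<le> real k * R"
    using k assms(1) by (intro mult_left_mono) (simp_all add: of_nat_diff)
  moreover have "real n \<le> real k * real q + real k" using q by (metis of_nat_add of_nat_le_iff of_nat_mult)
  then have "(real k - 1) * (real n - real k) \<le> (real k - 1) * (real k * real q)"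
    using k by (intro mult_left_mono) simp_all
  moreover have "real k \<le> real k * real k" using k by simp
  ultimately have bound: "\<bar>real k * R - (real k - 1) * real n\<bar> \<le> 3 * real k * real k"
    using up by (simp add: algebra_simps abs_le_iff)
  have "real_of_int R / real n - (1 - 1 / real k)
      = (real k * R - (real k - 1) * real n) / (real k * real n)"
    using k n by (simp add: field_simps)
  then have "\<bar>real_of_int R / real n - (1 - 1 / real k)\<bar>
      = \<bar>real k * R - (real k - 1) * real n\<bar> / (real k * real n)"
    using k n by (simp add: abs_divide)
  also have "\<dots> \<le> 3 * real k * real k / (real k * real n)"
    using bound k n by (intro divide_right_mono) simp_all
  also have "\<dots> = 3 * real k / real n" using k by simp
  finally show ?thesis .
qed

lemma rel_interval_fwf_eqI:
  fixes A :: "'a list \<Rightarrow> nat"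
  assumes finV: "finite V" and k1: "k \<ge> 1"
    and bounds: "\<And>rs. A rs \<le> fwf k rs
      \<and> int k * (int (fwf k rs) - int (A rs)) \<le> int (k - 1) * int (length rs) + int k"
    and equal: "\<And>n. \<exists>rs. respects_graph V E rs \<and> length rs = n \<and> A rs = fwf k rs"
    and excess: "\<And>n. \<exists>rs. respects_graph V E rs \<and> length rs = n
      \<and> int (k - 1) * int (n div k) - 2 * int k \<le> int (fwf k rs) - int (A rs)"
  shows "rel_interval (fwf k) A V E = (0, ereal (1 - 1 / real k))"
proof -
  have "rel_min (fwf k) A n V E = 0" for n
  proof -
    obtain rs0 where rs0: "respects_graph V E rs0" "length rs0 = n" "A rs0 = fwf k rs0"
      using equal by blast
    moreover obtain rs where "rel_min (fwf k) A n V E = int (fwf k rs) - int (A rs)"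
      using rel_min_max_attained(1)[OF finV rs0(1,2)] by blast
    ultimately show ?thesis using rel_min_le[OF finV rs0(1), of "fwf k" A] bounds[of rs] by simp
  qed
  moreover have "\<bar>real_of_int (rel_max (fwf k) A n V E) / real n - (1 - 1 / real k)\<bar> \<le> 3 * real k / real n"
    if "n \<ge> 1" for n
  proof -
    obtain rs0 where rs0: "respects_graph V E rs0" "length rs0 = n"
      "int (k - 1) * int (n div k) - 2 * int k \<le> int (fwf k rs0) - int (A rs0)"
      using excess by blast
    obtain rs where "length rs = n" "rel_max (fwf k) A n V E = int (fwf k rs) - int (A rs)"
      using rel_min_max_attained(2)[OF finV rs0(1,2)] by blast
    then have "int k * rel_max (fwf k) A n V E \<le> int (k - 1) * int n + int k"
      using bounds[of rs] by simp
    moreover have "int (k - 1) * int (n div k) - 2 * int k \<le> rel_max (fwf k) A n V E"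
      using rel_max_ge[OF finV rs0(1), of "fwf k" A] rs0 by simp
    moreover have "n \<le> k * (n div k) + k"
    proof -
      have "n = k * (n div k) + n mod k" by simp
      moreover have "n mod k < k" using k1 by simp
      ultimately show ?thesis by linarith
    qed
    ultimately show ?thesis by (rule rel_max_rate[OF k1 that])
  qed
  then have "(\<lambda>n. real_of_int (rel_max (fwf k) A n V E) / real n) \<longlonglongrightarrow> 1 - 1 / real k"
    by (rule LIMSEQ_abs_diff_le_over_n)
  ultimately show ?thesis
    unfolding rel_interval_def by (simp add: lim_imp_Limsup zero_ereal_def[symmetric] Liminf_const)
qed

lemma lru_rel_interval:
  assumes k1: "k \<ge> 1" and "finite V" and sym: "\<forall>u v. E u v \<longrightarrow> E v u"
    and "contains_path V E (k + 1)"
  shows "rel_interval (fwf k) (lru k) V E = (0, ereal (1 - 1 / real k))"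
proof -
  obtain vs where vs: "length vs = k + 1" "distinct vs" "set vs \<subseteq> V"
    "\<forall>i. Suc i < k + 1 \<longrightarrow> E (vs ! i) (vs ! Suc i)"
    using \<open>contains_path V E (k + 1)\<close> unfolding contains_path_def by blast
  have inj: "inj_on ((!) vs) {0..k}" using vs by (auto intro!: inj_onI simp: nth_eq_iff_index_eq)
  have V: "(!) vs ` {0..k} \<subseteq> V" using vs by (auto dest: nth_mem)
  have edges: "E (vs ! j) (vs ! Suc j) \<and> E (vs ! Suc j) (vs ! j)" if "j < k" for j
    using vs sym that by auto
  show ?thesis
  proof (rule rel_interval_fwf_eqI[OF \<open>finite V\<close> k1 lru_fwf_bounds[OF k1]])
    show "\<exists>rs. respects_graph V E rs \<and> length rs = n \<and> lru k rs = fwf k rs" for n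
      using V by (intro exI[of _ "replicate n (vs ! 0)"])
        (auto simp: respects_graph_def lru_replicate[OF k1] fwf_replicate[OF k1])
    show "\<exists>rs. respects_graph V E rs \<and> length rs = n
      \<and> int (k - 1) * int (n div k) - 2 * int k \<le> int (fwf k rs) - int (lru k rs)" for n
      using zigzag_seq_respects[OF k1 edges V]
        zigzag_fwf_excess[where St="zigzag_cache ((!) vs) k", OF k1 inj lru_zigzag_block[OF k1 inj]]
      by (intro exI[of _ "zigzag_seq ((!) vs) k n"]) (simp add: lru_eq_faults zigzag_seq_def)
  qed
qed

lemma far_rel_interval_path:
  assumes k1: "k \<ge> 1" and "N \<ge> k + 1"
  shows "rel_interval (fwf k) (far k path_edge) {0..<N} path_edge = (0, ereal (1 - 1 / real k))"
proof (rule rel_interval_fwf_eqI[OF _ k1 far_fwf_bounds[OF k1]])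
  show "\<exists>rs. respects_graph {0..<N} path_edge rs \<and> length rs = n \<and> far k path_edge rs = fwf k rs"
    for n
    using assms by (intro exI[of _ "replicate n 0"])
      (auto simp: respects_graph_def far_replicate[OF k1] fwf_replicate[OF k1])
  have "respects_graph {0..<N} path_edge (zigzag_seq id k n)" for n
    using assms by (intro zigzag_seq_respects[OF k1]) (auto simp: path_edge_def)
  then show "\<exists>rs. respects_graph {0..<N} path_edge rs \<and> length rs = n
    \<and> int (k - 1) * int (n div k) - 2 * int k \<le> int (fwf k rs) - int (far k path_edge rs)" for n
    using zigzag_fwf_excess[where St="\<lambda>m. (zigzag_cache id k m, zigzag_cache id k m)",
        OF k1 _ far_zigzag_block[OF k1]]
    by (intro exI[of _ "zigzag_seq id k n"]) (simp add: far_eq_faults zigzag_seq_def)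
qed simp

theorem theorem2:
  fixes k N :: nat
  assumes "k \<ge> 1" and "N \<ge> k + 1"
  shows "rel_interval (fwf k) (lru k) {0..<N} path_edge = (0, ereal (1 - 1 / real k))
       \<and> rel_interval (fwf k) (far k path_edge) {0..<N} path_edge = (0, ereal (1 - 1 / real k))
       \<and> (\<forall>(V :: 'a set) E. finite V \<and> (\<forall>u v. E u v \<longrightarrow> u \<in> V \<and> v \<in> V)
             \<and> (\<forall>u v. E u v \<longrightarrow> E v u) \<and> contains_path V E (k + 1)
           \<longrightarrow> rel_interval (fwf k) (lru k) V E = (0, ereal (1 - 1 / real k)))"
proof (intro conjI allI impI)
  have "contains_path {0..<N} path_edge (k + 1)"
    unfolding contains_path_def using assms(2)
    by (intro exI[of _ "[0..<k + 1]"]) (auto simp: path_edge_def nth_upt simp del: upt_Suc)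
  then show "rel_interval (fwf k) (lru k) {0..<N} path_edge = (0, ereal (1 - 1 / real k))"
    by (intro lru_rel_interval[OF assms(1)]) (auto simp: path_edge_def)
  show "rel_interval (fwf k) (far k path_edge) {0..<N} path_edge = (0, ereal (1 - 1 / real k))"
    by (rule far_rel_interval_path[OF assms])
  fix V :: "'a set" and E
  assume "finite V \<and> (\<forall>u v. E u v \<longrightarrow> u \<in> V \<and> v \<in> V) \<and> (\<forall>u v. E u v \<longrightarrow> E v u)
    \<and> contains_path V E (k + 1)"
  then show "rel_interval (fwf k) (lru k) V E = (0, ereal (1 - 1 / real k))"
    \<comment> \<open>\<open>E\<close> need not live on \<open>V\<close>: respecting sequences lie in \<open>V\<close> anyway\<close>
    using lru_rel_interval[OF assms(1)] by blast
qed

end
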